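(* Let $K$ and $L$ be regular languages over a finite alphabet $A$ with syntactic monoids $M$ and $N$, where $|M|=m$ and $|N|=n$, and let $a\in A$. Then the syntactic monoid of the language $KaL=\{\,uav\mid u\in K,\ v\in L\,\}$ has at most $mn(2^{mn}-1)+1$ elements.
   Context: The syntactic congruence of $R\subseteq A^*$ is $u\sim_R v$ iff for all $p,q\in A^*$, $puq\in R\Leftrightarrow pvq\in R$; the syntactic monoid of $R$ is $A^*/{\sim_R}$. *)

theory Defs
  imports Main
begin

definition regular :: "'a list set \<Rightarrow> bool" where
  "regular R \<longleftrightarrow> (\<exists>(Q :: nat set) (\<delta> :: nat \<Rightarrow> 'a \<Rightarrow> nat) q0 F.
      finite Q \<and> q0 \<in> Q \<and> F \<subseteq> Q \<and> (\<forall>q\<in>Q. \<forall>x. \<delta> q x \<in> Q) \<and>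
      R = {w. foldl \<delta> q0 w \<in> F})"

definition synt_cong :: "'a list set \<Rightarrow> ('a list \<times> 'a list) set" where
  "synt_cong R = {(u, v). \<forall>p q. p @ u @ q \<in> R \<longleftrightarrow> p @ v @ q \<in> R}"

definition synt_monoid :: "'a list set \<Rightarrow> 'a list set set" where
  "synt_monoid R = UNIV // synt_cong R"

definition marked_concat :: "'a list set \<Rightarrow> 'a \<Rightarrow> 'a list set \<Rightarrow> 'a list set" where
  "marked_concat K a L = {u @ [a] @ v | u v. u \<in> K \<and> v \<in> L}"

end

theory Submission
  imports Defs "HOL-Library.FuncSet"
begin

text \<open>A word \<open>w\<close> lies in \<open>KaL\<close> inside a context \<open>p _ q\<close> either because the marker \<open>a\<close> falls in
  \<open>p\<close>, or in \<open>q\<close>, or inside \<open>w\<close>. The first two cases only depend on the classes of \<open>w\<close> in the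
  syntactic monoids \<open>M\<close> and \<open>N\<close> of \<open>K\<close> and \<open>L\<close>; the third only on the set of pairs
  \<open>([p]\<^sub>K, [q]\<^sub>L) \<in> M \<times> N\<close> for which \<open>w\<close> factors as \<open>uav\<close> with \<open>pu \<in> K\<close> and \<open>vq \<in> L\<close>.
  If this set is all of \<open>M \<times> N\<close>, every context accepts \<open>w\<close> and \<open>w\<close> is a zero; otherwise the
  class of \<open>w\<close> is determined by a triple in \<open>M \<times> N \<times> (2\<^bsup>M \<times> N\<^esup> - {M \<times> N})\<close>.\<close>

lemma synt_cong_equiv: "equiv UNIV (synt_cong R)"
  unfolding equiv_def refl_on_def sym_def trans_def synt_cong_def by auto

lemma synt_cong_class_eq_iff: "synt_cong R `` {x} = synt_cong R `` {y} \<longleftrightarrow> (x, y) \<in> synt_cong R"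
  using eq_equiv_class_iff[OF synt_cong_equiv] by blast

lemma synt_congD: "(u, v) \<in> synt_cong R \<Longrightarrow> p @ u @ q \<in> R \<longleftrightarrow> p @ v @ q \<in> R"
  unfolding synt_cong_def by auto

lemma card_quotient_le_card_range:
  assumes "equiv UNIV R" and "\<And>x y. f x = f y \<Longrightarrow> (x, y) \<in> R" and "finite (range f)"
  shows "finite (UNIV // R)" and "card (UNIV // R) \<le> card (range f)"
proof -
  have "UNIV // R \<subseteq> (\<lambda>b. R `` {inv f b}) ` range f"
  proof
    fix X assume "X \<in> UNIV // R"
    then obtain x where X: "X = R `` {x}" by (auto simp: quotient_def)
    have "(inv f (f x), x) \<in> R" using assms(2) by (simp add: f_inv_into_f)
    then have "R `` {inv f (f x)} = R `` {x}" using equiv_class_eq[OF assms(1)] by blast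
    then show "X \<in> (\<lambda>b. R `` {inv f b}) ` range f" using X by blast
  qed
  moreover have "finite ((\<lambda>b. R `` {inv f b}) ` range f)" using assms(3) by simp
  ultimately show "finite (UNIV // R)" and "card (UNIV // R) \<le> card (range f)"
    by (auto intro: finite_subset order_trans[OF card_mono card_image_le[OF assms(3)]])
qed

lemma foldl_closed: "q \<in> Q \<Longrightarrow> \<forall>q\<in>Q. \<forall>x. \<delta> q x \<in> Q \<Longrightarrow> foldl \<delta> q w \<in> Q"
  by (induction w arbitrary: q) auto

lemma regular_imp_finite_synt_monoid:
  assumes "regular R"
  shows "finite (synt_monoid R)"
proof -
  obtain Q :: "nat set" and \<delta> q0 F where Q: "finite Q" "q0 \<in> Q" "\<forall>q\<in>Q. \<forall>x. \<delta> q x \<in> Q"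
    and R: "R = {w. foldl \<delta> q0 w \<in> F}"
    using assms unfolding regular_def by metis
  define transition where "transition w = restrict (\<lambda>q. foldl \<delta> q w) Q" for w
  have "range transition \<subseteq> Q \<rightarrow>\<^sub>E Q"
    using foldl_closed[OF _ Q(3)] by (auto simp: transition_def)
  then have "finite (range transition)"
    by (rule finite_subset) (simp add: finite_PiE Q(1))
  moreover have "(u, v) \<in> synt_cong R" if "transition u = transition v" for u v
    unfolding synt_cong_def
  proof clarify
    fix p q
    have "foldl \<delta> q0 p \<in> Q" using foldl_closed[OF Q(2,3)] .
    then have "foldl \<delta> (foldl \<delta> q0 p) u = foldl \<delta> (foldl \<delta> q0 p) v"
      using that unfolding transition_def by (metis restrict_apply')
    then show "p @ u @ q \<in> R \<longleftrightarrow> p @ v @ q \<in> R" using R by simp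
  qed
  ultimately show ?thesis
    unfolding synt_monoid_def using card_quotient_le_card_range(1)[OF synt_cong_equiv] by blast
qed

lemma ex_append_eq_append_Cons_iff:
  "(\<exists>u v. x @ y = u @ a # v \<and> P u v) \<longleftrightarrow>
     (\<exists>x1 x2. x = x1 @ a # x2 \<and> P x1 (x2 @ y)) \<or> (\<exists>y1 y2. y = y1 @ a # y2 \<and> P (x @ y1) y2)"
proof
  assume "\<exists>u v. x @ y = u @ a # v \<and> P u v"
  then obtain u v where uv: "x @ y = u @ a # v" and P: "P u v" by blast
  from uv[unfolded append_eq_append_conv2] obtain us
    where "x = u @ us \<and> us @ y = a # v \<or> x @ us = u \<and> y = us @ a # v" by blast
  then show "(\<exists>x1 x2. x = x1 @ a # x2 \<and> P x1 (x2 @ y)) \<or> (\<exists>y1 y2. y = y1 @ a # y2 \<and> P (x @ y1) y2)"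
  proof
    assume "x = u @ us \<and> us @ y = a # v"
    with P show ?thesis
      by (cases us) (auto intro: exI[of _ "[]"] exI[of _ u])
  qed (use P in blast)
qed (metis append.assoc append_Cons)+

lemma ex_append3_eq_append_Cons_iff:
  "(\<exists>u v. p @ w @ q = u @ a # v \<and> P u v) \<longleftrightarrow>
     (\<exists>p1 p2. p = p1 @ a # p2 \<and> P p1 (p2 @ w @ q)) \<or>
     (\<exists>w1 w2. w = w1 @ a # w2 \<and> P (p @ w1) (w2 @ q)) \<or>
     (\<exists>q1 q2. q = q1 @ a # q2 \<and> P (p @ w @ q1) q2)"
  using ex_append_eq_append_Cons_iff[of p "w @ q" a P]
    ex_append_eq_append_Cons_iff[of w q a "\<lambda>u v. P (p @ u) v"]
  by simp

definition marker_inside :: "'a list set \<Rightarrow> 'a \<Rightarrow> 'a list set \<Rightarrow> 'a list \<Rightarrow> 'a list \<Rightarrow> 'a list \<Rightarrow> bool"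
  where "marker_inside K a L w p q \<longleftrightarrow> (\<exists>u v. w = u @ a # v \<and> p @ u \<in> K \<and> v @ q \<in> L)"

lemma marker_inside_synt_cong:
  assumes "(p, p') \<in> synt_cong K" and "(q, q') \<in> synt_cong L"
  shows "marker_inside K a L w p q \<longleftrightarrow> marker_inside K a L w p' q'"
  using synt_congD[OF assms(1), of "[]"] synt_congD[OF assms(2), where q = "[]"]
  unfolding marker_inside_def by simp

lemma append3_mem_marked_concat_iff:
  "p @ w @ q \<in> marked_concat K a L \<longleftrightarrow>
     (\<exists>p1 p2. p = p1 @ a # p2 \<and> p1 \<in> K \<and> p2 @ w @ q \<in> L) \<or>
     marker_inside K a L w p q \<or>
     (\<exists>q1 q2. q = q1 @ a # q2 \<and> p @ w @ q1 \<in> K \<and> q2 \<in> L)"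
proof -
  have "p @ w @ q \<in> marked_concat K a L \<longleftrightarrow> (\<exists>u v. p @ w @ q = u @ a # v \<and> u \<in> K \<and> v \<in> L)"
    unfolding marked_concat_def by auto
  then show ?thesis
    unfolding ex_append3_eq_append_Cons_iff marker_inside_def by simp
qed

definition marker_trace :: "'a list set \<Rightarrow> 'a \<Rightarrow> 'a list set \<Rightarrow> 'a list \<Rightarrow> ('a list set \<times> 'a list set) set"
  where "marker_trace K a L w =
    {(synt_cong K `` {p}, synt_cong L `` {q}) | p q. marker_inside K a L w p q}"

lemma mem_marker_trace_iff:
  "(synt_cong K `` {p}, synt_cong L `` {q}) \<in> marker_trace K a L w \<longleftrightarrow> marker_inside K a L w p q"
proof
  assume "(synt_cong K `` {p}, synt_cong L `` {q}) \<in> marker_trace K a L w"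
  then obtain p' q' where "(p, p') \<in> synt_cong K" "(q, q') \<in> synt_cong L"
    and "marker_inside K a L w p' q'"
    unfolding marker_trace_def by (auto simp: synt_cong_class_eq_iff)
  then show "marker_inside K a L w p q" by (simp add: marker_inside_synt_cong)
qed (auto simp: marker_trace_def)

text \<open>\<open>None\<close> is the common value of all zeros of the syntactic monoid of \<open>KaL\<close>.\<close>

definition marker_signature ::
    "'a list set \<Rightarrow> 'a \<Rightarrow> 'a list set \<Rightarrow> 'a list \<Rightarrow> ('a list set \<times> 'a list set \<times> ('a list set \<times> 'a list set) set) option"
  where "marker_signature K a L w =
    (if \<forall>p q. marker_inside K a L w p q then None
     else Some (synt_cong K `` {w}, synt_cong L `` {w}, marker_trace K a L w))"

lemma synt_cong_marked_concat_if_marker_signature_eq: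
  assumes "marker_signature K a L w = marker_signature K a L w'"
  shows "(w, w') \<in> synt_cong (marked_concat K a L)"
proof (cases "\<forall>p q. marker_inside K a L w p q")
  case True
  with assms have "\<forall>p q. marker_inside K a L w' p q"
    unfolding marker_signature_def by (auto split: if_splits)
  with True show ?thesis
    unfolding synt_cong_def by (simp add: append3_mem_marked_concat_iff)
next
  case False
  with assms have "\<not> (\<forall>p q. marker_inside K a L w' p q)"
    unfolding marker_signature_def by (auto split: if_splits)
  with False assms have "(synt_cong K `` {w}, synt_cong L `` {w}, marker_trace K a L w) =
      (synt_cong K `` {w'}, synt_cong L `` {w'}, marker_trace K a L w')"
    unfolding marker_signature_def by (simp only: if_False option.inject)
  then have "(w, w') \<in> synt_cong K" "(w, w') \<in> synt_cong L"
    and "marker_trace K a L w = marker_trace K a L w'"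
    by (simp_all add: synt_cong_class_eq_iff)
  then have "marker_inside K a L w p q \<longleftrightarrow> marker_inside K a L w' p q" for p q
    by (metis mem_marker_trace_iff)
  with synt_congD[OF \<open>(w, w') \<in> synt_cong K\<close>] synt_congD[OF \<open>(w, w') \<in> synt_cong L\<close>]
  show ?thesis
    unfolding synt_cong_def by (simp add: append3_mem_marked_concat_iff)
qed

lemma range_marker_signature_subset:
  fixes K L :: "'a list set"
  defines "M \<equiv> synt_monoid K" and "N \<equiv> synt_monoid L"
  shows "range (marker_signature K a L) \<subseteq> insert None (Some ` (M \<times> N \<times> (Pow (M \<times> N) - {M \<times> N})))"
proof clarify
  fix w
  assume "marker_signature K a L w \<notin> Some ` (M \<times> N \<times> (Pow (M \<times> N) - {M \<times> N}))"
  have M: "M = range (\<lambda>p. synt_cong K `` {p})" and N: "N = range (\<lambda>q. synt_cong L `` {q})"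
    unfolding M_def N_def synt_monoid_def quotient_def by auto
  show "marker_signature K a L w = None"
  proof (rule ccontr)
    assume "marker_signature K a L w \<noteq> None"
    then obtain p q where "\<not> marker_inside K a L w p q"
      unfolding marker_signature_def by (auto split: if_splits)
    then have "(synt_cong K `` {p}, synt_cong L `` {q}) \<in> M \<times> N - marker_trace K a L w"
      by (simp add: M N mem_marker_trace_iff)
    moreover have "marker_trace K a L w \<subseteq> M \<times> N"
      unfolding marker_trace_def M N by auto
    ultimately show False
      using \<open>marker_signature K a L w \<notin> _\<close> \<open>marker_signature K a L w \<noteq> None\<close>
      unfolding marker_signature_def by (auto simp: M N split: if_splits)
  qed
qed

lemma card_signature_space:
  assumes "finite M" and "finite N" and "card M = m" and "card N = n"
  shows "card (insert None (Some ` (M \<times> N \<times> (Pow (M \<times> N) - {M \<times> N}))))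
           \<le> m * n * (2 ^ (m * n) - 1) + 1"
proof -
  let ?S = "M \<times> N \<times> (Pow (M \<times> N) - {M \<times> N})"
  have "card ?S = m * n * (2 ^ (m * n) - 1)"
    using assms by (simp add: card_Diff_singleton card_Pow card_cartesian_product)
  moreover have "card (insert None (Some ` ?S)) \<le> card (Some ` ?S) + 1"
    using assms by (simp add: card_insert_if)
  ultimately show ?thesis by (simp add: card_image)
qed

theorem proposition4:
  fixes K L :: "'a list set" and a :: 'a and m n :: nat
  assumes "finite (UNIV :: 'a set)"
    and "regular K" and "regular L"
    and "card (synt_monoid K) = m" and "card (synt_monoid L) = n"
  shows "card (synt_monoid (marked_concat K a L)) \<le> m * n * (2 ^ (m * n) - 1) + 1"
proof -
  let ?S = "insert None (Some ` (synt_monoid K \<times> synt_monoid L \<times>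
              (Pow (synt_monoid K \<times> synt_monoid L) - {synt_monoid K \<times> synt_monoid L})))"
  have fin: "finite (synt_monoid K)" "finite (synt_monoid L)"
    using assms(2,3) by (simp_all add: regular_imp_finite_synt_monoid)
  have range: "range (marker_signature K a L) \<subseteq> ?S"
    by (rule range_marker_signature_subset)
  have "finite ?S" using fin by simp
  with range have "card (synt_monoid (marked_concat K a L)) \<le> card (range (marker_signature K a L))"
    unfolding synt_monoid_def
    by (intro card_quotient_le_card_range(2) synt_cong_equiv
        synt_cong_marked_concat_if_marker_signature_eq) (auto intro: finite_subset)
  also have "\<dots> \<le> card ?S" using range \<open>finite ?S\<close> by (rule card_mono[rotated])
  also have "\<dots> \<le> m * n * (2 ^ (m * n) - 1) + 1"
    using card_signature_space[OF fin assms(4,5)] .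
  finally show ?thesis .
qed

end
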